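(* Let $q_\sigma$ be a noise distribution satisfying the Assumption below, let $p$ be a probability distribution on $\mathcal A$ with finite support, let $a'\in\mathcal A$ with $q_\sigma(a'\mid a)>0$ for all $a\in\mathrm{supp}(p)$ and $\sigma>0$, and let $S:\mathcal A\times\mathcal A\to\mathbb R$ be any function. Define $$p(a\mid a')=\frac{q_\sigma(a'\mid a)\,p(a)}{\sum_{b\in\mathrm{supp}(p)}q_\sigma(a'\mid b)\,p(b)}.$$ Then $$\lim_{\sigma\to0^+}\sum_{a\in\mathrm{supp}(p)}S(a,a')\,p(a\mid a')=\frac{\sum_{a\in C(a',p)}S(a,a')\,p(a)}{\sum_{a\in C(a',p)}p(a)}=\mathbb{E}_{a\sim p_C(\cdot\mid a')}\big[S(a,a')\big],$$ where $C(a',p)=\{a\in\mathrm{supp}(p):\ \|a'-a\|_2^2\le\|a'-y\|_2^2\ \text{for all } y\in\mathrm{supp}(p)\}$ and $p_C(a\mid a')=p(a)/\sum_{b\in C(a',p)}p(b)$ for $a\in C(a',p)$.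
   Context: Action space $\mathcal A\subseteq\mathbb R^n$. A noise distribution $q_\sigma(\cdot\mid a)$ is a probability density/mass function parameterized by $a\in\mathcal A$ and $\sigma>0$ whose support contains $\mathcal A$. Assumption: for all $a,a_1,a_2\in\mathcal A$: (1) if $\|a_1-a\|_2^2>\|a_2-a\|_2^2$ then $\lim_{\sigma\to0^+}q_\sigma(a\mid a_1)/q_\sigma(a\mid a_2)=0$; (2) if $\|a_1-a\|_2^2=\|a_2-a\|_2^2$ then $\lim_{\sigma\to0^+}q_\sigma(a\mid a_1)/q_\sigma(a\mid a_2)=1$. *)

theory Defs
  imports "HOL-Analysis.Analysis" "HOL-Probability.Probability_Mass_Function"
begin

text \<open>A noise distribution: q sigma a x is the value q_sigma(x | a) of the
density/mass function with parameter a in the action space AA and sigma > 0.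
It is nonnegative and its support contains AA (positive on AA).\<close>
definition noise_distribution ::
  "('a::real_normed_vector) set \<Rightarrow> (real \<Rightarrow> 'a \<Rightarrow> 'a \<Rightarrow> real) \<Rightarrow> bool" where
  "noise_distribution AA q \<longleftrightarrow>
     (\<forall>\<sigma>>0. \<forall>a\<in>AA. (\<forall>x. 0 \<le> q \<sigma> a x) \<and> (\<forall>x\<in>AA. 0 < q \<sigma> a x))"

definition noise_assumption ::
  "('a::real_normed_vector) set \<Rightarrow> (real \<Rightarrow> 'a \<Rightarrow> 'a \<Rightarrow> real) \<Rightarrow> bool" where
  "noise_assumption AA q \<longleftrightarrow>
     (\<forall>a\<in>AA. \<forall>a1\<in>AA. \<forall>a2\<in>AA.
        (norm (a1 - a)^2 > norm (a2 - a)^2 \<longrightarrow>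
           ((\<lambda>\<sigma>. q \<sigma> a1 a / q \<sigma> a2 a) \<longlongrightarrow> 0) (at_right 0)) \<and>
        (norm (a1 - a)^2 = norm (a2 - a)^2 \<longrightarrow>
           ((\<lambda>\<sigma>. q \<sigma> a1 a / q \<sigma> a2 a) \<longlongrightarrow> 1) (at_right 0)))"

definition posterior ::
  "(real \<Rightarrow> 'a \<Rightarrow> 'a \<Rightarrow> real) \<Rightarrow> real \<Rightarrow> 'a pmf \<Rightarrow> 'a \<Rightarrow> 'a \<Rightarrow> real" where
  "posterior q \<sigma> p a' a =
     q \<sigma> a a' * pmf p a / (\<Sum>b\<in>set_pmf p. q \<sigma> b a' * pmf p b)"

definition closest_set :: "('a::real_normed_vector) \<Rightarrow> 'a pmf \<Rightarrow> 'a set" where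
  "closest_set a' p =
     {a\<in>set_pmf p. \<forall>y\<in>set_pmf p. norm (a' - a)^2 \<le> norm (a' - y)^2}"

definition pC :: "'a pmf \<Rightarrow> ('a::real_normed_vector) \<Rightarrow> 'a \<Rightarrow> real" where
  "pC p a' a = pmf p a / (\<Sum>b\<in>closest_set a' p. pmf p b)"

end

theory Submission
  imports Defs
begin

text \<open>Dividing all likelihoods q_sigma(a' | a) by that of a fixed closest support point a0 does
not change the posterior. By the Assumption each rescaled likelihood tends to 1 if a is as close
to a' as a0, and to 0 otherwise; the posterior expectation is thus a continuous function of
finitely many quantities converging to the indicator of C(a', p), whose p-mass is positive.\<close>

lemma weighted_average_scale_invariant:
  fixes f w m :: "'a \<Rightarrow> real"
  assumes "c \<noteq> 0"
  shows "(\<Sum>a\<in>P. f a * (w a / c * m a)) / (\<Sum>a\<in>P. w a / c * m a)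
       = (\<Sum>a\<in>P. f a * (w a * m a)) / (\<Sum>a\<in>P. w a * m a)"
proof -
  have "(\<Sum>a\<in>P. f a * (w a / c * m a)) = (\<Sum>a\<in>P. f a * (w a * m a)) / c"
    "(\<Sum>a\<in>P. w a / c * m a) = (\<Sum>a\<in>P. w a * m a) / c"
    by (simp_all add: sum_divide_distrib)
  then show ?thesis
    using assms by simp
qed

lemma tendsto_weighted_average:
  fixes f m L :: "'a \<Rightarrow> real" and w :: "'b \<Rightarrow> 'a \<Rightarrow> real"
  assumes "finite P"
    and "\<forall>\<^sub>F x in F. w x a0 \<noteq> 0"
    and "\<And>a. a \<in> P \<Longrightarrow> ((\<lambda>x. w x a / w x a0) \<longlongrightarrow> L a) F"
    and "(\<Sum>a\<in>P. L a * m a) \<noteq> 0"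
  shows "((\<lambda>x. (\<Sum>a\<in>P. f a * (w x a * m a)) / (\<Sum>a\<in>P. w x a * m a)) \<longlongrightarrow>
           (\<Sum>a\<in>P. f a * (L a * m a)) / (\<Sum>a\<in>P. L a * m a)) F"
proof -
  have "((\<lambda>x. (\<Sum>a\<in>P. f a * (w x a / w x a0 * m a)) / (\<Sum>a\<in>P. w x a / w x a0 * m a)) \<longlongrightarrow>
           (\<Sum>a\<in>P. f a * (L a * m a)) / (\<Sum>a\<in>P. L a * m a)) F"
    using assms(3,4) by (intro tendsto_divide tendsto_sum tendsto_mult tendsto_const) auto
  moreover have "\<forall>\<^sub>F x in F.
      (\<Sum>a\<in>P. f a * (w x a / w x a0 * m a)) / (\<Sum>a\<in>P. w x a / w x a0 * m a)
    = (\<Sum>a\<in>P. f a * (w x a * m a)) / (\<Sum>a\<in>P. w x a * m a)"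
    using assms(2) by eventually_elim (rule weighted_average_scale_invariant)
  ultimately show ?thesis
    by (rule Lim_transform_eventually)
qed

lemma sum_times_posterior:
  "(\<Sum>a\<in>set_pmf p. f a * posterior q \<sigma> p a' a)
     = (\<Sum>a\<in>set_pmf p. f a * (q \<sigma> a a' * pmf p a)) / (\<Sum>a\<in>set_pmf p. q \<sigma> a a' * pmf p a)"
  unfolding posterior_def sum_divide_distrib by (simp add: times_divide_eq_right)

lemma closest_set_subset: "closest_set a' p \<subseteq> set_pmf p"
  unfolding closest_set_def by auto

lemma closest_set_nonempty:
  assumes "finite (set_pmf p)"
  shows "closest_set a' p \<noteq> {}"
proof -
  obtain a0 where "a0 \<in> set_pmf p" "\<forall>y\<in>set_pmf p. norm (a' - a0)^2 \<le> norm (a' - y)^2"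
    using arg_min_if_finite[OF assms set_pmf_not_empty, of "\<lambda>a. norm (a' - a)^2"]
    by (metis not_le)
  then show ?thesis
    unfolding closest_set_def by blast
qed

lemma sum_pmf_closest_set_pos:
  assumes "finite (set_pmf p)"
  shows "(\<Sum>a\<in>closest_set a' p. pmf p a) > 0"
proof -
  have "finite (closest_set a' p)"
    using assms closest_set_subset finite_subset by blast
  moreover have "\<forall>a\<in>closest_set a' p. pmf p a > 0"
    using closest_set_subset[of a' p] by (auto intro: pmf_positive)
  ultimately show ?thesis
    using closest_set_nonempty[OF assms] by (intro sum_pos) auto
qed

lemma likelihood_ratio_tendsto_indicator_closest:
  assumes "noise_assumption AA q" "set_pmf p \<subseteq> AA" "a' \<in> AA"
    and "a0 \<in> closest_set a' p" "a \<in> set_pmf p"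
  shows "((\<lambda>\<sigma>. q \<sigma> a a' / q \<sigma> a0 a') \<longlongrightarrow> indicator (closest_set a' p) a) (at_right 0)"
proof -
  have AA: "a \<in> AA" "a0 \<in> AA"
    using assms(2,4,5) closest_set_subset by auto
  have a0_min: "norm (a' - a0)^2 \<le> norm (a' - y)^2" if "y \<in> set_pmf p" for y
    using assms(4) that unfolding closest_set_def by auto
  show ?thesis
  proof (cases "a \<in> closest_set a' p")
    case True
    then have "norm (a' - a)^2 \<le> norm (a' - a0)^2"
      using assms(4) closest_set_subset unfolding closest_set_def by blast
    with a0_min[OF assms(5)] have "norm (a - a')^2 = norm (a0 - a')^2"
      by (simp add: norm_minus_commute)
    then show ?thesis
      using True assms(1,3) AA unfolding noise_assumption_def by simp
  next
    case False
    then have "\<not> (\<forall>y\<in>set_pmf p. norm (a' - a)^2 \<le> norm (a' - y)^2)"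
      using assms(5) unfolding closest_set_def by blast
    then obtain y where "y \<in> set_pmf p" "norm (a' - a)^2 > norm (a' - y)^2"
      by (meson not_le)
    then have "norm (a' - a)^2 > norm (a' - a0)^2"
      using a0_min[of y] by linarith
    then have "norm (a - a')^2 > norm (a0 - a')^2"
      by (simp only: norm_minus_commute)
    then show ?thesis
      using False assms(1,3) AA unfolding noise_assumption_def by simp
  qed
qed

theorem mainTheorem3:
  fixes AA :: "(real ^ 'n) set"
    and q :: "real \<Rightarrow> real ^ 'n \<Rightarrow> real ^ 'n \<Rightarrow> real"
    and p :: "(real ^ 'n) pmf"
    and a' :: "real ^ 'n"
    and S :: "real ^ 'n \<Rightarrow> real ^ 'n \<Rightarrow> real"
  assumes "noise_distribution AA q"
    and "noise_assumption AA q"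
    and "set_pmf p \<subseteq> AA"
    and "finite (set_pmf p)"
    and "a' \<in> AA"
    and "\<And>a \<sigma>. a \<in> set_pmf p \<Longrightarrow> \<sigma> > 0 \<Longrightarrow> q \<sigma> a a' > 0"
  shows "((\<lambda>\<sigma>. \<Sum>a\<in>set_pmf p. S a a' * posterior q \<sigma> p a' a) \<longlongrightarrow>
           (\<Sum>a\<in>closest_set a' p. S a a' * pmf p a) / (\<Sum>a\<in>closest_set a' p. pmf p a))
           (at_right 0)
       \<and> (\<Sum>a\<in>closest_set a' p. S a a' * pmf p a) / (\<Sum>a\<in>closest_set a' p. pmf p a)
           = (\<Sum>a\<in>closest_set a' p. pC p a' a * S a a')"
proof
  let ?C = "closest_set a' p"
  have C_inter: "set_pmf p \<inter> ?C = ?C"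
    using closest_set_subset by blast
  obtain a0 where a0: "a0 \<in> ?C"
    using closest_set_nonempty[OF assms(4)] by blast
  have q_a0_nonzero: "q \<sigma> a0 a' \<noteq> 0" if "\<sigma> > 0" for \<sigma>
    using assms(6) a0 closest_set_subset that by fastforce
  have "\<forall>\<^sub>F \<sigma> in at_right 0. q \<sigma> a0 a' \<noteq> 0"
    by (rule eventually_mono[OF eventually_at_right_less q_a0_nonzero])
  moreover have "((\<lambda>\<sigma>. q \<sigma> a a' / q \<sigma> a0 a') \<longlongrightarrow> indicator ?C a) (at_right 0)"
    if "a \<in> set_pmf p" for a
    using likelihood_ratio_tendsto_indicator_closest[OF assms(2,3,5) a0 that] .
  moreover have "(\<Sum>a\<in>set_pmf p. indicator ?C a * pmf p a) \<noteq> 0"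
    using sum_pmf_closest_set_pos[OF assms(4), of a']
    by (simp only: Indicator_Function.sum_indicator_mult[OF assms(4)] C_inter)
  ultimately have "((\<lambda>\<sigma>. (\<Sum>a\<in>set_pmf p. S a a' * (q \<sigma> a a' * pmf p a)) /
                 (\<Sum>a\<in>set_pmf p. q \<sigma> a a' * pmf p a)) \<longlongrightarrow>
      (\<Sum>a\<in>set_pmf p. S a a' * (indicator ?C a * pmf p a)) /
        (\<Sum>a\<in>set_pmf p. indicator ?C a * pmf p a)) (at_right 0)"
    by (rule tendsto_weighted_average[OF assms(4)])
  then show "((\<lambda>\<sigma>. \<Sum>a\<in>set_pmf p. S a a' * posterior q \<sigma> p a' a) \<longlongrightarrow>
      (\<Sum>a\<in>?C. S a a' * pmf p a) / (\<Sum>a\<in>?C. pmf p a)) (at_right 0)"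
    by (simp only: sum_times_posterior mult.left_commute[of "S _ _"]
        Indicator_Function.sum_indicator_mult[OF assms(4)] C_inter)
  show "(\<Sum>a\<in>?C. S a a' * pmf p a) / (\<Sum>a\<in>?C. pmf p a) = (\<Sum>a\<in>?C. pC p a' a * S a a')"
    unfolding pC_def sum_divide_distrib by (simp add: mult.commute)
qed

end
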